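(* Let $d\ge1$, $p\ge2$, $n<\infty$, and let $\{\xi(i,m)\}$ be martingale differences as in the context with $\mu_m(dp)<\infty$ for all $m=1,\dots,d$. Then $$\sup_{b\in B(d,n)}|Q_d|_p\le\gamma(d)\,p^d\prod_{m=1}^d\mu_m(dp),$$ where $\gamma(1)=\sqrt2$ and $\gamma(d+1)=\sqrt2\,(1+1/d)^d\gamma(d)$.
   Context: Martingale setting: filtration $\mathcal F(0)\subset\mathcal F(1)\subset\cdots$ with $\mathcal F(0)$ trivial; for $m=1,\dots,d$, $\xi(i,m)$ is $\mathcal F(i)$-measurable, integrable, $\mathbf E[\xi(i,m)\mid\mathcal F(i-1)]=0$. $I(d,n)=\{(i_1,\dots,i_d):1\le i_1<\dots<i_d\le n\}$, $\xi(I)=\prod_m\xi(i_m,m)$, $Q_d=\sum_{I\in I(d,n)}b(I)\xi(I)$, $B(d,n)=\{b:\sum_Ib(I)^2=1\}$. $|\eta|_p=(\mathbf E|\eta|^p)^{1/p}$, $\mu_m(p)=\sup_i|\xi(i,m)|_p$. *)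

theory Defs
  imports "HOL-Probability.Probability"
begin

text \<open>gamma(1) = sqrt 2, gamma(d+1) = sqrt 2 * (1 + 1/d)^d * gamma(d); gamma 0 is unused.\<close>
fun gamma_const :: "nat \<Rightarrow> real" where
  "gamma_const 0 = 0"
| "gamma_const (Suc 0) = sqrt 2"
| "gamma_const (Suc (Suc d)) =
     sqrt 2 * (1 + 1 / real (Suc d)) ^ (Suc d) * gamma_const (Suc d)"

definition index_set :: "nat \<Rightarrow> nat \<Rightarrow> nat list set" where
  "index_set d n = {is. length is = d \<and> sorted_wrt (<) is \<and> set is \<subseteq> {1..n}}"

text \<open>xi(I) = prod_m xi(i_m, m), m = 1..d (list position k corresponds to m = k+1).\<close>
definition xi_prod :: "(nat \<Rightarrow> nat \<Rightarrow> 'a \<Rightarrow> real) \<Rightarrow> nat list \<Rightarrow> 'a \<Rightarrow> real" where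
  "xi_prod \<xi> is x = (\<Prod>k<length is. \<xi> (is ! k) (Suc k) x)"

definition Q_form :: "nat \<Rightarrow> nat \<Rightarrow> (nat list \<Rightarrow> real) \<Rightarrow> (nat \<Rightarrow> nat \<Rightarrow> 'a \<Rightarrow> real) \<Rightarrow> 'a \<Rightarrow> real" where
  "Q_form d n b \<xi> x = (\<Sum>I\<in>index_set d n. b I * xi_prod \<xi> I x)"

definition moment :: "'a measure \<Rightarrow> real \<Rightarrow> ('a \<Rightarrow> real) \<Rightarrow> ennreal" where
  "moment M p X = (\<integral>\<^sup>+ x. ennreal (\<bar>X x\<bar> powr p) \<partial>M)"

text \<open>mu_m(q) = sup_{i>=1} |xi(i,m)|_q (used only when these are finite).\<close>
definition mu :: "'a measure \<Rightarrow> (nat \<Rightarrow> nat \<Rightarrow> 'a \<Rightarrow> real) \<Rightarrow> nat \<Rightarrow> real \<Rightarrow> real" where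
  "mu M \<xi> m q = (SUP i\<in>{1..}. (\<integral> x. \<bar>\<xi> i m x\<bar> powr q \<partial>M) powr (1 / q))"

end

theory Submission
  imports Defs
begin

(*
  Splitting off the last index, Q_(d+1) = sum_j Y_j xi(j, d+1), where Y_j is a
  form of order d in the indices below j, hence F(j-1)-measurable, so the summands are martingale
  differences.  For martingale differences and p >= 2 one has Rio's inequality
    ||sum_j D_j||_p^2 <= p (p - 1) sum_j ||D_j||_p^2,
  obtained by integrating the second order Taylor bound for |x + y|^p: the linear term vanishes
  by orthogonality and the quadratic one is controlled by Holder's inequality.  Each summand is
  then estimated by Holder with exponents p (1 + 1/d) and p (d + 1) and by the induction
  hypothesis at the exponent p (1 + 1/d); the sum of squared coefficients of the Y_j is that of
  Q_(d+1).  The change of exponent produces the factor (1 + 1/d)^d in gamma.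
*)

lemma abs_powr_eq_sq_powr: "\<bar>s\<bar> powr a = (s * s) powr (a / 2)" for s a :: real
proof -
  have "s * s = \<bar>s\<bar> powr 2"
    by (cases "s = 0") (auto simp: powr_numeral power2_eq_square)
  moreover have "(\<bar>s\<bar> powr 2) powr (a / 2) = \<bar>s\<bar> powr a"
    by (subst powr_powr) simp
  ultimately show ?thesis
    by simp
qed

lemma abs_powr_mult_self_has_real_derivative:
  fixes a t :: real
  assumes "a > 0"
  shows "((\<lambda>t. \<bar>t\<bar> powr a * t) has_real_derivative (a + 1) * \<bar>t\<bar> powr a) (at t)"
proof (cases "t = 0")
  case True
  have "((\<lambda>h. \<bar>h\<bar> powr a) \<longlongrightarrow> \<bar>0\<bar> powr a) (at (0::real))"
    using assms by (intro tendsto_intros) auto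
  moreover have "\<forall>\<^sub>F h in at 0. \<bar>h\<bar> powr a = (\<bar>0 + h\<bar> powr a * (0 + h) - \<bar>0\<bar> powr a * 0) / h"
    by (auto simp: eventually_at_filter)
  ultimately show ?thesis
    using True by (simp add: DERIV_def tendsto_cong)
next
  case False
  then have pos: "t * t > 0"
    by (auto simp: zero_less_mult_iff linorder_neq_iff)
  have "((\<lambda>s. (s * s) powr (a / 2) * s) has_real_derivative
      a / 2 * (t * t) powr (a / 2 - 1) * (t + t) * t + (t * t) powr (a / 2)) (at t)"
    using pos by (auto intro!: derivative_eq_intros)
  moreover have "a / 2 * (t * t) powr (a / 2 - 1) * (t + t) * t + (t * t) powr (a / 2)
      = (a + 1) * \<bar>t\<bar> powr a"
  proof -
    have "(t * t) powr (a / 2 - 1) * (t * t) = (t * t) powr (a / 2)"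
      using pos by (simp add: powr_diff)
    then show ?thesis
      by (simp add: abs_powr_eq_sq_powr algebra_simps)
  qed
  ultimately show ?thesis
    by (simp add: abs_powr_eq_sq_powr[of _ a])
qed

lemma abs_powr_eq_powr_minus_two_mult_sq:
  fixes p t :: real
  assumes "p > 2"
  shows "\<bar>t\<bar> powr p = \<bar>t\<bar> powr (p - 2) * t * t"
proof (cases "t = 0")
  case False
  have "\<bar>t\<bar> powr p = \<bar>t\<bar> powr (p - 2) * \<bar>t\<bar> powr 2"
    by (subst powr_add[symmetric]) simp
  moreover have "\<bar>t\<bar> powr 2 = t * t"
    using abs_powr_eq_sq_powr[of t 2] by simp
  ultimately show ?thesis
    by (metis mult.assoc)
qed (use assms in simp)

lemma abs_powr_has_real_derivative:
  fixes p t :: real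
  assumes "p > 2"
  shows "((\<lambda>t. \<bar>t\<bar> powr p) has_real_derivative p * (\<bar>t\<bar> powr (p - 2) * t)) (at t)"
proof -
  have "((\<lambda>t. \<bar>t\<bar> powr (p - 2) * t * t) has_real_derivative
      (p - 1) * \<bar>t\<bar> powr (p - 2) * t + \<bar>t\<bar> powr (p - 2) * t) (at t)"
    using DERIV_mult[OF abs_powr_mult_self_has_real_derivative[of "p - 2" t] DERIV_ident] assms
    by (simp add: algebra_simps)
  then show ?thesis
    using assms by (simp add: abs_powr_eq_powr_minus_two_mult_sq algebra_simps)
qed

lemma abs_add_powr_le_taylor:
  fixes p x y :: real
  assumes p: "p > 2"
  shows "\<bar>x + y\<bar> powr p \<le> \<bar>x\<bar> powr p + p * (\<bar>x\<bar> powr (p - 2) * x) * y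
           + p * (p - 1) / 2 * (\<bar>x\<bar> powr (p - 2) + \<bar>x + y\<bar> powr (p - 2)) * y\<^sup>2"
proof (cases "y = 0")
  case False
  define diff :: "nat \<Rightarrow> real \<Rightarrow> real" where
    "diff m = (if m = 0 then (\<lambda>t. \<bar>t\<bar> powr p)
      else if m = 1 then (\<lambda>t. p * (\<bar>t\<bar> powr (p - 2) * t))
      else (\<lambda>t. p * ((p - 1) * \<bar>t\<bar> powr (p - 2))))" for m
  have "((\<lambda>t. p * (\<bar>t\<bar> powr (p - 2) * t)) has_real_derivative p * ((p - 1) * \<bar>t\<bar> powr (p - 2))) (at t)"
    for t
    using DERIV_cmult[OF abs_powr_mult_self_has_real_derivative[of "p - 2" t], of p] p
    by (simp add: algebra_simps)
  then have "\<forall>m t. m < 2 \<and> min x (x + y) \<le> t \<and> t \<le> max x (x + y) \<longrightarrow>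
      DERIV (diff m) t :> diff (Suc m) t"
    using abs_powr_has_real_derivative[OF p] by (auto simp: diff_def less_2_cases_iff)
  then obtain z where z: "if x + y < x then x + y < z \<and> z < x else x < z \<and> z < x + y"
    and taylor: "diff 0 (x + y) = (\<Sum>m<2. diff m x / fact m * (x + y - x) ^ m)
                                  + diff 2 z / fact 2 * (x + y - x) ^ 2"
    using Taylor[of 2 diff _ "min x (x + y)" "max x (x + y)" x "x + y"] False
    by (auto simp: diff_def)
  have "\<bar>z\<bar> powr (p - 2) \<le> max \<bar>x\<bar> \<bar>x + y\<bar> powr (p - 2)"
    using z p by (intro powr_mono2) (auto split: if_splits)
  also have "\<dots> \<le> \<bar>x\<bar> powr (p - 2) + \<bar>x + y\<bar> powr (p - 2)"
    by (simp add: max_def)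
  finally have "p * (p - 1) / 2 * \<bar>z\<bar> powr (p - 2) * y\<^sup>2
      \<le> p * (p - 1) / 2 * (\<bar>x\<bar> powr (p - 2) + \<bar>x + y\<bar> powr (p - 2)) * y\<^sup>2"
    using p by (intro mult_right_mono mult_left_mono) auto
  then show ?thesis
    using taylor by (simp add: diff_def eval_nat_numeral)
qed (use p in simp)

lemma abs_add_powr_le:
  fixes x y p :: real
  assumes "p \<ge> 0"
  shows "\<bar>x + y\<bar> powr p \<le> 2 powr p * (\<bar>x\<bar> powr p + \<bar>y\<bar> powr p)"
proof -
  have "\<bar>x + y\<bar> powr p \<le> (2 * max \<bar>x\<bar> \<bar>y\<bar>) powr p"
    using assms by (intro powr_mono2) auto
  also have "\<dots> = 2 powr p * max \<bar>x\<bar> \<bar>y\<bar> powr p"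
    by (simp add: powr_mult)
  also have "\<dots> \<le> 2 powr p * (\<bar>x\<bar> powr p + \<bar>y\<bar> powr p)"
    by (intro mult_left_mono) (auto simp: max_def)
  finally show ?thesis .
qed

lemma sq_le_of_powr_le_self_bound:
  fixes a z e c p :: real
  assumes p: "p > 2" and nonneg: "a \<ge> 0" "z \<ge> 0" "c \<ge> 0"
    and bound: "z powr p \<le> a powr p + c * (a powr (p - 2) + z powr (p - 2)) * e\<^sup>2"
  shows "z\<^sup>2 \<le> a\<^sup>2 + 2 * c * e\<^sup>2"
proof (rule ccontr)
  assume "\<not> ?thesis"
  then have gt: "z\<^sup>2 - c * e\<^sup>2 > a\<^sup>2 + c * e\<^sup>2"
    by simp
  have split: "t powr p = t powr (p - 2) * t\<^sup>2" if "t \<ge> 0" for t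
    using abs_powr_eq_powr_minus_two_mult_sq[OF p, of t] that by (simp add: power2_eq_square)
  have "c * e\<^sup>2 \<ge> 0"
    using nonneg by simp
  then have "a\<^sup>2 < z\<^sup>2"
    using gt by linarith
  then have "a < z"
    using nonneg(2) by (rule power2_less_imp_less)
  then have "z > 0"
    using nonneg(1) by linarith
  then have "a powr (p - 2) \<le> z powr (p - 2)"
    using p nonneg \<open>a < z\<close> by (intro powr_mono2) auto
  have "a powr (p - 2) * (a\<^sup>2 + c * e\<^sup>2) \<le> z powr (p - 2) * (a\<^sup>2 + c * e\<^sup>2)"
    using \<open>a powr (p - 2) \<le> z powr (p - 2)\<close> nonneg by (intro mult_right_mono) auto
  also have "\<dots> < z powr (p - 2) * (z\<^sup>2 - c * e\<^sup>2)"
    using gt \<open>z > 0\<close> by (intro mult_strict_left_mono) auto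
  finally show False
    using bound split nonneg by (simp add: algebra_simps)
qed

section \<open>L^p norms and Holder's inequality\<close>

text \<open>If \<open>|f|^p\<close> is not integrable the Bochner integral is 0, hence the integrability
  hypotheses below.\<close>

definition Lp_norm :: "'a measure \<Rightarrow> real \<Rightarrow> ('a \<Rightarrow> real) \<Rightarrow> real" where
  "Lp_norm M p f = (\<integral>x. \<bar>f x\<bar> powr p \<partial>M) powr (1 / p)"

lemma Lp_norm_nonneg: "Lp_norm M p f \<ge> 0"
  by (simp add: Lp_norm_def)

lemma Lp_norm_powr: "p \<noteq> 0 \<Longrightarrow> Lp_norm M p f powr p = (\<integral>x. \<bar>f x\<bar> powr p \<partial>M)"
  by (simp add: Lp_norm_def powr_powr)

lemma Youngs_inequality_scaled:
  fixes u v A B a b :: real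
  assumes ab: "a > 1" "b > 1" "1 / a + 1 / b = 1" and uv: "u \<ge> 0" "v \<ge> 0" and AB: "A > 0" "B > 0"
  shows "u * v \<le> A powr (1 / a) * B powr (1 / b) * (u powr a / (a * A) + v powr b / (b * B))"
proof -
  have pos: "A powr (1 / a) > 0" "B powr (1 / b) > 0"
    using AB by auto
  have "(u / A powr (1 / a)) * (v / B powr (1 / b))
      \<le> (u / A powr (1 / a)) powr a / a + (v / B powr (1 / b)) powr b / b"
    by (rule Youngs_inequality[OF ab]) (use uv pos in auto)
  also have "(u / A powr (1 / a)) powr a = u powr a / A"
    using uv AB ab by (simp add: powr_divide powr_powr)
  also have "(v / B powr (1 / b)) powr b = v powr b / B"
    using uv AB ab by (simp add: powr_divide powr_powr)
  finally show ?thesis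
    using pos by (simp add: field_simps)
qed

lemma Holder_integrable:
  fixes f g :: "'a \<Rightarrow> real"
  assumes ab: "a > 1" "b > 1" "1 / a + 1 / b = 1"
    and [measurable]: "f \<in> borel_measurable M" "g \<in> borel_measurable M"
    and "integrable M (\<lambda>x. \<bar>f x\<bar> powr a)" "integrable M (\<lambda>x. \<bar>g x\<bar> powr b)"
  shows "integrable M (\<lambda>x. f x * g x)"
proof (rule Bochner_Integration.integrable_bound)
  show "integrable M (\<lambda>x. \<bar>f x\<bar> powr a / a + \<bar>g x\<bar> powr b / b)"
    using assms by auto
  show "AE x in M. norm (f x * g x) \<le> norm (\<bar>f x\<bar> powr a / a + \<bar>g x\<bar> powr b / b)"
    using Youngs_inequality[OF ab abs_ge_zero abs_ge_zero] ab by (auto simp: abs_mult)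
qed measurable

lemma Holder_inequality:
  fixes f g :: "'a \<Rightarrow> real"
  assumes ab: "a > 1" "b > 1" "1 / a + 1 / b = 1"
    and [measurable]: "f \<in> borel_measurable M" "g \<in> borel_measurable M"
    and fi: "integrable M (\<lambda>x. \<bar>f x\<bar> powr a)" and gi: "integrable M (\<lambda>x. \<bar>g x\<bar> powr b)"
  shows "(\<integral>x. \<bar>f x * g x\<bar> \<partial>M) \<le> Lp_norm M a f * Lp_norm M b g"
proof -
  define A where "A = (\<integral>x. \<bar>f x\<bar> powr a \<partial>M)"
  define B where "B = (\<integral>x. \<bar>g x\<bar> powr b \<partial>M)"
  have "A \<ge> 0" "B \<ge> 0"
    by (auto simp: A_def B_def)
  show ?thesis
  proof (cases "A = 0 \<or> B = 0")
    case True
    then have "AE x in M. \<bar>f x\<bar> powr a = 0 \<or> \<bar>g x\<bar> powr b = 0"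
      using fi gi by (auto simp: A_def B_def integral_nonneg_eq_0_iff_AE)
    then have "AE x in M. \<bar>f x * g x\<bar> = 0"
      by eventually_elim auto
    then show ?thesis
      by (simp add: integral_eq_zero_AE Lp_norm_def mult_nonneg_nonneg)
  next
    case False
    with \<open>A \<ge> 0\<close> \<open>B \<ge> 0\<close> have AB: "A > 0" "B > 0"
      by auto
    have "(\<integral>x. \<bar>f x * g x\<bar> \<partial>M)
        \<le> (\<integral>x. A powr (1 / a) * B powr (1 / b) * (\<bar>f x\<bar> powr a / (a * A) + \<bar>g x\<bar> powr b / (b * B)) \<partial>M)"
      using integrable_abs[OF Holder_integrable[OF assms]] fi gi
      by (intro integral_mono) (auto simp: abs_mult intro!: Youngs_inequality_scaled[OF ab _ _ AB])
    also have "\<dots> = A powr (1 / a) * B powr (1 / b) * (A / (a * A) + B / (b * B))"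
      using fi gi by (simp add: A_def B_def)
    also have "\<dots> = Lp_norm M a f * Lp_norm M b g"
      using AB ab by (simp add: A_def B_def Lp_norm_def field_simps)
    finally show ?thesis .
  qed
qed

lemma Holder_inequality_Lp_norm:
  fixes f g :: "'a \<Rightarrow> real"
  assumes q: "q > 0" "a > q" "b > q" "1 / a + 1 / b = 1 / q"
    and [measurable]: "f \<in> borel_measurable M" "g \<in> borel_measurable M"
    and fi: "integrable M (\<lambda>x. \<bar>f x\<bar> powr a)" and gi: "integrable M (\<lambda>x. \<bar>g x\<bar> powr b)"
  shows "integrable M (\<lambda>x. \<bar>f x * g x\<bar> powr q)"
    and "Lp_norm M q (\<lambda>x. f x * g x) \<le> Lp_norm M a f * Lp_norm M b g"
proof -
  have ab: "a / q > 1" "b / q > 1" "1 / (a / q) + 1 / (b / q) = 1"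
    using q by (auto simp: field_simps)
  have f_powr: "\<bar>\<bar>f x\<bar> powr q\<bar> powr (a / q) = \<bar>f x\<bar> powr a" for x
    using q by (simp add: powr_powr)
  have g_powr: "\<bar>\<bar>g x\<bar> powr q\<bar> powr (b / q) = \<bar>g x\<bar> powr b" for x
    using q by (simp add: powr_powr)
  have fg_powr: "\<bar>f x * g x\<bar> powr q = \<bar>f x\<bar> powr q * \<bar>g x\<bar> powr q" for x
    by (simp add: abs_mult powr_mult)
  show "integrable M (\<lambda>x. \<bar>f x * g x\<bar> powr q)"
    unfolding fg_powr by (rule Holder_integrable[OF ab]) (use fi gi f_powr g_powr in auto)
  have "(\<integral>x. \<bar>f x * g x\<bar> powr q \<partial>M)
      \<le> Lp_norm M (a / q) (\<lambda>x. \<bar>f x\<bar> powr q) * Lp_norm M (b / q) (\<lambda>x. \<bar>g x\<bar> powr q)"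
    unfolding fg_powr
    using Holder_inequality[OF ab, of "\<lambda>x. \<bar>f x\<bar> powr q" M "\<lambda>x. \<bar>g x\<bar> powr q"] fi gi f_powr g_powr
    by (simp add: abs_mult)
  also have "\<dots> = (Lp_norm M a f * Lp_norm M b g) powr q"
    using q by (simp add: Lp_norm_def f_powr g_powr powr_powr powr_mult)
  finally have "Lp_norm M q (\<lambda>x. f x * g x) \<le> ((Lp_norm M a f * Lp_norm M b g) powr q) powr (1 / q)"
    unfolding Lp_norm_def using q by (intro powr_mono2) auto
  then show "Lp_norm M q (\<lambda>x. f x * g x) \<le> Lp_norm M a f * Lp_norm M b g"
    using q by (simp add: powr_powr Lp_norm_nonneg)
qed

lemma abs_signed_powr_powr:
  fixes s p :: real
  assumes "p > 1"
  shows "\<bar>\<bar>s\<bar> powr (p - 2) * s\<bar> powr (p / (p - 1)) = \<bar>s\<bar> powr p"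
proof -
  have "\<bar>\<bar>s\<bar> powr (p - 2) * s\<bar> = \<bar>s\<bar> powr (p - 1)"
  proof (cases "s = 0")
    case False
    then have "\<bar>\<bar>s\<bar> powr (p - 2) * s\<bar> = \<bar>s\<bar> powr (p - 2) * \<bar>s\<bar> powr 1"
      by (simp add: abs_mult)
    also have "\<dots> = \<bar>s\<bar> powr (p - 1)"
      by (subst powr_add[symmetric]) simp
    finally show ?thesis .
  qed (use assms in simp)
  then show ?thesis
    using assms by (simp add: powr_powr)
qed

lemma integrable_signed_powr_mult:
  fixes f g :: "'a \<Rightarrow> real"
  assumes p: "p > 1"
    and [measurable]: "f \<in> borel_measurable M" "g \<in> borel_measurable M"
    and "integrable M (\<lambda>x. \<bar>f x\<bar> powr p)" "integrable M (\<lambda>x. \<bar>g x\<bar> powr p)"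
  shows "integrable M (\<lambda>x. (\<bar>f x\<bar> powr (p - 2) * f x) * g x)"
proof (rule Holder_integrable[of "p / (p - 1)" p])
  show "p / (p - 1) > 1" "1 / (p / (p - 1)) + 1 / p = 1"
    using p by (auto simp: field_simps)
qed (use assms abs_signed_powr_powr[OF p] in auto)

lemma integral_abs_powr_mult_sq_le:
  fixes f g :: "'a \<Rightarrow> real"
  assumes p: "p > 2"
    and [measurable]: "f \<in> borel_measurable M" "g \<in> borel_measurable M"
    and fi: "integrable M (\<lambda>x. \<bar>f x\<bar> powr p)" and gi: "integrable M (\<lambda>x. \<bar>g x\<bar> powr p)"
  shows "integrable M (\<lambda>x. \<bar>f x\<bar> powr (p - 2) * (g x)\<^sup>2)"
    and "(\<integral>x. \<bar>f x\<bar> powr (p - 2) * (g x)\<^sup>2 \<partial>M) \<le> Lp_norm M p f powr (p - 2) * (Lp_norm M p g)\<^sup>2"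
proof -
  have ab: "p / (p - 2) > 1" "p / 2 > 1" "1 / (p / (p - 2)) + 1 / (p / 2) = 1"
    using p by (auto simp: field_simps)
  have f_powr: "\<bar>\<bar>f x\<bar> powr (p - 2)\<bar> powr (p / (p - 2)) = \<bar>f x\<bar> powr p" for x
    using p by (simp add: powr_powr)
  have g_powr: "(g x)\<^sup>2 powr (p / 2) = \<bar>g x\<bar> powr p" for x
    using abs_powr_eq_sq_powr[of "g x" p] by (simp add: power2_eq_square)
  show "integrable M (\<lambda>x. \<bar>f x\<bar> powr (p - 2) * (g x)\<^sup>2)"
    by (rule Holder_integrable[OF ab]) (use fi gi f_powr g_powr in auto)
  have "(\<integral>x. \<bar>f x\<bar> powr (p - 2) * (g x)\<^sup>2 \<partial>M)
      \<le> Lp_norm M (p / (p - 2)) (\<lambda>x. \<bar>f x\<bar> powr (p - 2)) * Lp_norm M (p / 2) (\<lambda>x. (g x)\<^sup>2)"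
    using Holder_inequality[OF ab, of "\<lambda>x. \<bar>f x\<bar> powr (p - 2)" M "\<lambda>x. (g x)\<^sup>2"] fi gi f_powr g_powr
    by (simp add: abs_mult)
  also have "\<dots> = Lp_norm M p f powr (p - 2) * (Lp_norm M p g)\<^sup>2"
    using p by (simp add: Lp_norm_def f_powr g_powr powr_powr flip: powr_numeral)
  finally show "(\<integral>x. \<bar>f x\<bar> powr (p - 2) * (g x)\<^sup>2 \<partial>M) \<le> Lp_norm M p f powr (p - 2) * (Lp_norm M p g)\<^sup>2" .
qed

lemma Lp_norm_two_sq: "(Lp_norm M 2 f)\<^sup>2 = (\<integral>x. (f x)\<^sup>2 \<partial>M)"
proof -
  have "\<bar>t\<bar> powr 2 = t\<^sup>2" for t :: real
    using abs_powr_eq_sq_powr[of t 2] by (simp add: power2_eq_square)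
  then show ?thesis
    by (simp add: Lp_norm_def power2_eq_square flip: powr_add)
qed

lemma Lp_norm_cmult: "p > 0 \<Longrightarrow> Lp_norm M p (\<lambda>x. c * f x) = \<bar>c\<bar> * Lp_norm M p f"
  by (simp add: Lp_norm_def abs_mult powr_mult powr_powr)

lemma moment_eq_Lp_norm_powr:
  assumes "p > 0" "integrable M (\<lambda>x. \<bar>f x\<bar> powr p)"
  shows "moment M p f = ennreal (Lp_norm M p f powr p)"
  using assms by (simp add: moment_def Lp_norm_powr nn_integral_eq_integral)

section \<open>Rio's inequality for martingale differences\<close>

lemma integrable_abs_add_powr:
  fixes f g :: "'a \<Rightarrow> real"
  assumes "p \<ge> 0" and [measurable]: "f \<in> borel_measurable M" "g \<in> borel_measurable M"
    and "integrable M (\<lambda>x. \<bar>f x\<bar> powr p)" "integrable M (\<lambda>x. \<bar>g x\<bar> powr p)"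
  shows "integrable M (\<lambda>x. \<bar>f x + g x\<bar> powr p)"
proof (rule Bochner_Integration.integrable_bound)
  show "integrable M (\<lambda>x. 2 powr p * (\<bar>f x\<bar> powr p + \<bar>g x\<bar> powr p))"
    using assms by auto
qed (auto intro!: AE_I2 abs_add_powr_le assms(1))

lemma integrable_abs_sum_powr:
  fixes f :: "'i \<Rightarrow> 'a \<Rightarrow> real"
  assumes "p \<ge> 0"
    and "\<And>i. i \<in> A \<Longrightarrow> f i \<in> borel_measurable M"
    and "\<And>i. i \<in> A \<Longrightarrow> integrable M (\<lambda>x. \<bar>f i x\<bar> powr p)"
  shows "integrable M (\<lambda>x. \<bar>\<Sum>i\<in>A. f i x\<bar> powr p)"
  using assms(2,3)
proof (induction A rule: infinite_finite_induct)
  case (insert a A)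
  then show ?case
    using integrable_abs_add_powr[OF assms(1), of "f a" M "\<lambda>x. \<Sum>i\<in>A. f i x"] by auto
qed (use assms(1) in auto)

lemma Lp_norm_add_powr_le:
  fixes S D :: "'a \<Rightarrow> real"
  assumes p: "p > 2" and [measurable]: "S \<in> borel_measurable M" "D \<in> borel_measurable M"
    and Si: "integrable M (\<lambda>x. \<bar>S x\<bar> powr p)" and Di: "integrable M (\<lambda>x. \<bar>D x\<bar> powr p)"
    and orth: "(\<integral>x. (\<bar>S x\<bar> powr (p - 2) * S x) * D x \<partial>M) = 0"
  defines "a \<equiv> Lp_norm M p S" and "z \<equiv> Lp_norm M p (\<lambda>x. S x + D x)" and "e \<equiv> Lp_norm M p D"
  shows "z powr p \<le> a powr p + p * (p - 1) / 2 * (a powr (p - 2) + z powr (p - 2)) * e\<^sup>2"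
proof -
  have SDi: "integrable M (\<lambda>x. \<bar>S x + D x\<bar> powr p)"
    using p Si Di by (intro integrable_abs_add_powr) auto
  have orth_i: "integrable M (\<lambda>x. (\<bar>S x\<bar> powr (p - 2) * S x) * D x)"
    using p Si Di by (intro integrable_signed_powr_mult) auto
  have Ti: "integrable M (\<lambda>x. \<bar>S x\<bar> powr (p - 2) * (D x)\<^sup>2)"
    and T: "(\<integral>x. \<bar>S x\<bar> powr (p - 2) * (D x)\<^sup>2 \<partial>M) \<le> a powr (p - 2) * e\<^sup>2"
    using integral_abs_powr_mult_sq_le[OF p _ _ Si Di] by (auto simp: a_def e_def)
  have SDTi: "integrable M (\<lambda>x. \<bar>S x + D x\<bar> powr (p - 2) * (D x)\<^sup>2)"
    and SDT: "(\<integral>x. \<bar>S x + D x\<bar> powr (p - 2) * (D x)\<^sup>2 \<partial>M) \<le> z powr (p - 2) * e\<^sup>2"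
    using integral_abs_powr_mult_sq_le[OF p _ _ SDi Di] by (auto simp: z_def e_def)
  have taylor: "\<bar>S x + D x\<bar> powr p \<le> \<bar>S x\<bar> powr p + p * ((\<bar>S x\<bar> powr (p - 2) * S x) * D x)
      + p * (p - 1) / 2 * (\<bar>S x\<bar> powr (p - 2) * (D x)\<^sup>2 + \<bar>S x + D x\<bar> powr (p - 2) * (D x)\<^sup>2)" for x
    using abs_add_powr_le_taylor[OF p, of "S x" "D x"] by (simp add: algebra_simps)
  have "z powr p = (\<integral>x. \<bar>S x + D x\<bar> powr p \<partial>M)"
    using p by (simp add: z_def Lp_norm_powr)
  also have "\<dots> \<le> (\<integral>x. \<bar>S x\<bar> powr p + p * ((\<bar>S x\<bar> powr (p - 2) * S x) * D x)
      + p * (p - 1) / 2 * (\<bar>S x\<bar> powr (p - 2) * (D x)\<^sup>2 + \<bar>S x + D x\<bar> powr (p - 2) * (D x)\<^sup>2) \<partial>M)"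
    using SDi Si orth_i Ti SDTi taylor by (intro integral_mono) auto
  also have "\<dots> = a powr p + p * (p - 1) / 2 * ((\<integral>x. \<bar>S x\<bar> powr (p - 2) * (D x)\<^sup>2 \<partial>M)
      + (\<integral>x. \<bar>S x + D x\<bar> powr (p - 2) * (D x)\<^sup>2 \<partial>M))"
    using Si orth_i Ti SDTi orth p by (simp add: a_def Lp_norm_powr)
  also have "\<dots> \<le> a powr p + p * (p - 1) / 2 * (a powr (p - 2) + z powr (p - 2)) * e\<^sup>2"
    using mult_left_mono[OF add_mono[OF T SDT], of "p * (p - 1) / 2"] p
    by (simp add: algebra_simps)
  finally show ?thesis .
qed

lemma Lp_norm_add_sq_le:
  fixes S D :: "'a \<Rightarrow> real"
  assumes p: "p \<ge> 2" and [measurable]: "S \<in> borel_measurable M" "D \<in> borel_measurable M"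
    and Si: "integrable M (\<lambda>x. \<bar>S x\<bar> powr p)" and Di: "integrable M (\<lambda>x. \<bar>D x\<bar> powr p)"
    and orth: "(\<integral>x. (\<bar>S x\<bar> powr (p - 2) * S x) * D x \<partial>M) = 0"
  shows "(Lp_norm M p (\<lambda>x. S x + D x))\<^sup>2 \<le> (Lp_norm M p S)\<^sup>2 + p * (p - 1) * (Lp_norm M p D)\<^sup>2"
proof (cases "p = 2")
  case True
  \<comment> \<open>The Holder exponent \<open>p / (p - 2)\<close> of the Taylor argument degenerates; here expand the square.\<close>
  have "integrable M (\<lambda>x. (\<bar>S x\<bar> powr (p - 2) * S x) * D x)"
    using p Si Di by (intro integrable_signed_powr_mult) auto
  moreover have "(\<lambda>x. (\<bar>S x\<bar> powr (p - 2) * S x) * D x) = (\<lambda>x. S x * D x)"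
    using True by (auto simp: fun_eq_iff)
  ultimately have "integrable M (\<lambda>x. S x * D x)" "(\<integral>x. S x * D x \<partial>M) = 0"
    using orth by auto
  moreover have "integrable M (\<lambda>x. (S x)\<^sup>2)" "integrable M (\<lambda>x. (D x)\<^sup>2)"
    using Si Di True abs_powr_eq_sq_powr[of "S _" 2] abs_powr_eq_sq_powr[of "D _" 2]
    by (simp_all add: power2_eq_square)
  ultimately have "(\<integral>x. (S x + D x)\<^sup>2 \<partial>M)
      = (\<integral>x. (S x)\<^sup>2 \<partial>M) + 2 * (\<integral>x. S x * D x \<partial>M) + (\<integral>x. (D x)\<^sup>2 \<partial>M)"
    by (simp add: power2_sum mult.assoc)
  then show ?thesis
    using True \<open>(\<integral>x. S x * D x \<partial>M) = 0\<close> by (simp add: Lp_norm_two_sq)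
next
  case False
  with p have "p > 2"
    by simp
  have "(Lp_norm M p (\<lambda>x. S x + D x))\<^sup>2 \<le> (Lp_norm M p S)\<^sup>2 + 2 * (p * (p - 1) / 2) * (Lp_norm M p D)\<^sup>2"
    using \<open>p > 2\<close> Lp_norm_add_powr_le[OF \<open>p > 2\<close> assms(2-6)]
    by (intro sq_le_of_powr_le_self_bound) (auto simp: Lp_norm_nonneg)
  then show ?thesis
    by simp
qed

lemma Lp_norm_sum_sq_le:
  fixes D :: "nat \<Rightarrow> 'a \<Rightarrow> real"
  assumes p: "p \<ge> 2"
    and "\<And>j. j \<in> {1..n} \<Longrightarrow> D j \<in> borel_measurable M"
    and "\<And>j. j \<in> {1..n} \<Longrightarrow> integrable M (\<lambda>x. \<bar>D j x\<bar> powr p)"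
    and "\<And>j. j \<in> {1..n} \<Longrightarrow>
      (\<integral>x. (\<bar>\<Sum>i\<in>{1..j-1}. D i x\<bar> powr (p - 2) * (\<Sum>i\<in>{1..j-1}. D i x)) * D j x \<partial>M) = 0"
  shows "(Lp_norm M p (\<lambda>x. \<Sum>j\<in>{1..n}. D j x))\<^sup>2 \<le> p * (p - 1) * (\<Sum>j\<in>{1..n}. (Lp_norm M p (D j))\<^sup>2)"
  using assms(2-4)
proof (induction n)
  case 0
  then show ?case
    using p by (simp add: Lp_norm_def)
next
  case (Suc n)
  have "(\<lambda>x. \<Sum>j\<in>{1..n}. D j x) \<in> borel_measurable M"
    using Suc.prems(1) by (intro borel_measurable_sum) auto
  moreover have "integrable M (\<lambda>x. \<bar>\<Sum>j\<in>{1..n}. D j x\<bar> powr p)"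
    using Suc.prems p by (intro integrable_abs_sum_powr) auto
  moreover have "(\<integral>x. (\<bar>\<Sum>j\<in>{1..n}. D j x\<bar> powr (p - 2) * (\<Sum>j\<in>{1..n}. D j x)) * D (Suc n) x \<partial>M) = 0"
    using Suc.prems(3)[of "Suc n"] by simp
  ultimately have "(Lp_norm M p (\<lambda>x. (\<Sum>j\<in>{1..n}. D j x) + D (Suc n) x))\<^sup>2
      \<le> (Lp_norm M p (\<lambda>x. \<Sum>j\<in>{1..n}. D j x))\<^sup>2 + p * (p - 1) * (Lp_norm M p (D (Suc n)))\<^sup>2"
    using Suc.prems by (intro Lp_norm_add_sq_le[OF p]) auto
  then show ?case
    using Suc p by (simp add: algebra_simps)
qed

lemma (in sigma_finite_subalgebra) integral_mult_eq_0_if_real_cond_exp_eq_0: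
  assumes "integrable M (\<lambda>x. f x * g x)"
    and [measurable]: "f \<in> borel_measurable F" "g \<in> borel_measurable M"
    and "AE x in M. real_cond_exp M F g x = 0"
  shows "(\<integral>x. f x * g x \<partial>M) = 0"
proof -
  have "(\<integral>x. f x * g x \<partial>M) = (\<integral>x. f x * real_cond_exp M F g x \<partial>M)"
    using real_cond_exp_intg(2)[OF assms(1-3)] by simp
  also have "\<dots> = (\<integral>x. 0 \<partial>M)"
    using real_cond_exp_intg(1)[OF assms(1-3)] assms(4) by (intro integral_cong_AE) auto
  finally show ?thesis
    by simp
qed

section \<open>Splitting off the last index\<close>

lemma index_set_0: "index_set 0 n = {[]}"
  by (auto simp: index_set_def)

lemma finite_index_set: "finite (index_set d n)"
proof (rule finite_subset)
  show "index_set d n \<subseteq> {xs. set xs \<subseteq> {1..n} \<and> length xs = d}"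
    by (auto simp: index_set_def)
qed (simp add: finite_lists_length_eq)

lemma index_set_Suc_Suc:
  "index_set (Suc d) (Suc n) = index_set (Suc d) n \<union> (\<lambda>I. I @ [Suc n]) ` index_set d n"
proof
  show "index_set (Suc d) (Suc n) \<subseteq> index_set (Suc d) n \<union> (\<lambda>I. I @ [Suc n]) ` index_set d n"
  proof
    fix J assume J: "J \<in> index_set (Suc d) (Suc n)"
    then have "J \<noteq> []"
      by (auto simp: index_set_def)
    then obtain I l where J_eq: "J = I @ [l]"
      by (metis rev_exhaust)
    have I: "sorted_wrt (<) I" "\<forall>i\<in>set I. i < l" "length I = d" "set I \<subseteq> {1..Suc n}"
      and l: "l \<in> {1..Suc n}"
      using J unfolding J_eq index_set_def by (auto simp: sorted_wrt_append)
    show "J \<in> index_set (Suc d) n \<union> (\<lambda>I. I @ [Suc n]) ` index_set d n"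
    proof (cases "l = Suc n")
      case True
      then have "I \<in> index_set d n"
        using I unfolding index_set_def by force
      then show ?thesis
        using True J_eq by auto
    next
      case False
      then have "J \<in> index_set (Suc d) n"
        using J I l unfolding J_eq index_set_def by force
      then show ?thesis
        by auto
    qed
  qed
  show "index_set (Suc d) n \<union> (\<lambda>I. I @ [Suc n]) ` index_set d n \<subseteq> index_set (Suc d) (Suc n)"
    by (auto simp: index_set_def sorted_wrt_append) (meson atLeastAtMost_iff le_imp_less_Suc subsetD)
qed

lemma sum_index_set_Suc:
  "(\<Sum>J\<in>index_set (Suc d) n. h J) = (\<Sum>j\<in>{1..n}. \<Sum>I\<in>index_set d (j - 1). h (I @ [j]))"
proof (induction n)
  case 0
  have "index_set (Suc d) 0 = {}"
    by (auto simp: index_set_def)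
  then show ?case
    by simp
next
  case (Suc n)
  have "index_set (Suc d) n \<inter> (\<lambda>I. I @ [Suc n]) ` index_set d n = {}"
    by (auto simp: index_set_def)
  then have "(\<Sum>J\<in>index_set (Suc d) (Suc n). h J)
      = (\<Sum>J\<in>index_set (Suc d) n. h J) + (\<Sum>I\<in>index_set d n. h (I @ [Suc n]))"
    unfolding index_set_Suc_Suc
    by (simp add: sum.union_disjoint finite_index_set sum.reindex inj_on_def)
  then show ?case
    using Suc by simp
qed

lemma Q_form_0: "Q_form 0 n b \<xi> x = b []"
  by (simp add: Q_form_def index_set_0 xi_prod_def)

lemma Q_form_Suc:
  "Q_form (Suc d) n b \<xi> x = (\<Sum>j\<in>{1..n}. Q_form d (j - 1) (\<lambda>I. b (I @ [j])) \<xi> x * \<xi> j (Suc d) x)"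
proof -
  have xi_prod_snoc: "xi_prod \<xi> (I @ [j]) x = xi_prod \<xi> I x * \<xi> j (Suc (length I)) x" for I j
    by (simp add: xi_prod_def nth_append)
  have "Q_form (Suc d) n b \<xi> x
      = (\<Sum>j\<in>{1..n}. \<Sum>I\<in>index_set d (j - 1). b (I @ [j]) * xi_prod \<xi> (I @ [j]) x)"
    unfolding Q_form_def by (rule sum_index_set_Suc)
  also have "\<dots> = (\<Sum>j\<in>{1..n}. \<Sum>I\<in>index_set d (j - 1). b (I @ [j]) * xi_prod \<xi> I x * \<xi> j (Suc d) x)"
    by (intro sum.cong refl) (auto simp: xi_prod_snoc index_set_def)
  finally show ?thesis
    by (simp add: Q_form_def sum_distrib_right)
qed

section \<open>Induction on the order of the form\<close>

lemma gamma_const_nonneg: "gamma_const d \<ge> 0"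
  by (induction d rule: gamma_const.induct) auto

lemma gamma_const_Suc:
  "d \<ge> 1 \<Longrightarrow> gamma_const (Suc d) = sqrt 2 * (1 + 1 / real d) ^ d * gamma_const d"
  by (cases d) auto

locale martingale_difference_array = prob_space M for M :: "'a measure" +
  fixes F :: "nat \<Rightarrow> 'a measure" and \<xi> :: "nat \<Rightarrow> nat \<Rightarrow> 'a \<Rightarrow> real" and d :: nat and r :: real
  assumes subalgebra_F: "\<And>i. subalgebra M (F i)"
    and sets_F_mono: "\<And>i j. i \<le> j \<Longrightarrow> sets (F i) \<subseteq> sets (F j)"
    and adapted: "\<And>i m. 1 \<le> i \<Longrightarrow> m \<in> {1..d} \<Longrightarrow> \<xi> i m \<in> borel_measurable (F i)"
    and real_cond_exp_eq_0:
      "\<And>i m. 1 \<le> i \<Longrightarrow> m \<in> {1..d} \<Longrightarrow> AE x in M. real_cond_exp M (F (i - 1)) (\<xi> i m) x = 0"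
    and integrable_moment: "\<And>i m. 1 \<le> i \<Longrightarrow> m \<in> {1..d} \<Longrightarrow> integrable M (\<lambda>x. \<bar>\<xi> i m x\<bar> powr r)"
    and bdd_above_Lp_norm: "\<And>m. m \<in> {1..d} \<Longrightarrow> bdd_above ((\<lambda>i. Lp_norm M r (\<xi> i m)) ` {1..})"
begin

lemma borel_measurable_F_mono:
  assumes "i \<le> j" "f \<in> borel_measurable (F i)"
  shows "f \<in> borel_measurable (F j)"
proof (rule measurable_from_subalg[OF _ assms(2)])
  show "subalgebra (F j) (F i)"
    using subalgebra_F[of i] subalgebra_F[of j] sets_F_mono[OF assms(1)]
    by (auto simp: subalgebra_def)
qed

lemma borel_measurable_F_imp_M: "f \<in> borel_measurable (F i) \<Longrightarrow> f \<in> borel_measurable M"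
  by (rule measurable_from_subalg[OF subalgebra_F])

lemma borel_measurable_xi: "1 \<le> i \<Longrightarrow> m \<in> {1..d} \<Longrightarrow> \<xi> i m \<in> borel_measurable M"
  by (rule borel_measurable_F_imp_M[OF adapted])

lemma Q_form_measurable:
  assumes "k \<le> d"
  shows "Q_form k n b \<xi> \<in> borel_measurable (F n)"
proof -
  have "xi_prod \<xi> I \<in> borel_measurable (F n)" if I: "I \<in> index_set k n" for I
    unfolding xi_prod_def
  proof (intro borel_measurable_prod)
    fix l assume l: "l \<in> {..<length I}"
    then have "I ! l \<in> {1..n}"
      using I nth_mem[of l I] unfolding index_set_def by blast
    moreover have "Suc l \<in> {1..d}"
      using I assms l by (auto simp: index_set_def)
    ultimately show "\<xi> (I ! l) (Suc l) \<in> borel_measurable (F n)"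
      by (intro borel_measurable_F_mono[OF _ adapted]) auto
  qed
  then show ?thesis
    unfolding Q_form_def[abs_def] by measurable
qed

lemma Lp_norm_le_mu: "1 \<le> i \<Longrightarrow> m \<in> {1..d} \<Longrightarrow> Lp_norm M r (\<xi> i m) \<le> mu M \<xi> m r"
  unfolding mu_def Lp_norm_def[symmetric] by (rule cSUP_upper[OF _ bdd_above_Lp_norm]) auto

lemma mu_nonneg: "m \<in> {1..d} \<Longrightarrow> mu M \<xi> m r \<ge> 0"
  using Lp_norm_le_mu[of 1 m] Lp_norm_nonneg[of M r] by (meson order_trans order_refl)

lemma Lp_norm_martingale_transform_sq_le:
  assumes m: "m \<in> {1..d}" and q: "q \<ge> 2"
    and Y_measurable: "\<And>j. j \<in> {1..n} \<Longrightarrow> Y j \<in> borel_measurable (F (j - 1))"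
    and Y_integrable: "\<And>j. j \<in> {1..n} \<Longrightarrow> integrable M (\<lambda>x. \<bar>Y j x * \<xi> j m x\<bar> powr q)"
  shows "integrable M (\<lambda>x. \<bar>\<Sum>j\<in>{1..n}. Y j x * \<xi> j m x\<bar> powr q)"
    and "(Lp_norm M q (\<lambda>x. \<Sum>j\<in>{1..n}. Y j x * \<xi> j m x))\<^sup>2
      \<le> q * (q - 1) * (\<Sum>j\<in>{1..n}. (Lp_norm M q (\<lambda>x. Y j x * \<xi> j m x))\<^sup>2)"
proof -
  define D where "D j x = Y j x * \<xi> j m x" for j x
  have D_F: "D j \<in> borel_measurable (F j)" if "j \<in> {1..n}" for j
    unfolding D_def using that m
    by (intro borel_measurable_times borel_measurable_F_mono[OF _ Y_measurable] adapted) auto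
  have D_M: "D j \<in> borel_measurable M" if "j \<in> {1..n}" for j
    using D_F[OF that] by (rule borel_measurable_F_imp_M)
  have D_integrable: "integrable M (\<lambda>x. \<bar>D j x\<bar> powr q)" if "j \<in> {1..n}" for j
    using Y_integrable[OF that] by (simp add: D_def)
  show "integrable M (\<lambda>x. \<bar>\<Sum>j\<in>{1..n}. Y j x * \<xi> j m x\<bar> powr q)"
    using q D_M D_integrable unfolding D_def by (intro integrable_abs_sum_powr) auto
  have orth: "(\<integral>x. (\<bar>\<Sum>i\<in>{1..j-1}. D i x\<bar> powr (q - 2) * (\<Sum>i\<in>{1..j-1}. D i x)) * D j x \<partial>M) = 0"
    if j: "j \<in> {1..n}" for j
  proof -
    define S where "S x = (\<Sum>i\<in>{1..j-1}. D i x)" for x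
    interpret finite_measure_subalgebra M "F (j - 1)"
      by unfold_locales (rule subalgebra_F)
    have "S \<in> borel_measurable (F (j - 1))"
      unfolding S_def using j by (intro borel_measurable_sum borel_measurable_F_mono[OF _ D_F]) auto
    moreover have "integrable M (\<lambda>x. (\<bar>S x\<bar> powr (q - 2) * S x) * D j x)"
      using q j D_M D_integrable unfolding S_def
      by (intro integrable_signed_powr_mult integrable_abs_sum_powr borel_measurable_sum) auto
    ultimately have "(\<integral>x. (\<bar>S x\<bar> powr (q - 2) * S x * Y j x) * \<xi> j m x \<partial>M) = 0"
      using j m Y_measurable[OF j] borel_measurable_xi[of j m] real_cond_exp_eq_0[of j m]
      by (intro integral_mult_eq_0_if_real_cond_exp_eq_0) (auto simp: D_def mult.assoc)
    then show ?thesis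
      by (simp add: S_def D_def mult.assoc)
  qed
  have "(Lp_norm M q (\<lambda>x. \<Sum>j\<in>{1..n}. D j x))\<^sup>2 \<le> q * (q - 1) * (\<Sum>j\<in>{1..n}. (Lp_norm M q (D j))\<^sup>2)"
    using D_M D_integrable orth by (intro Lp_norm_sum_sq_le[OF q])
  then show "(Lp_norm M q (\<lambda>x. \<Sum>j\<in>{1..n}. Y j x * \<xi> j m x))\<^sup>2
      \<le> q * (q - 1) * (\<Sum>j\<in>{1..n}. (Lp_norm M q (\<lambda>x. Y j x * \<xi> j m x))\<^sup>2)"
    by (simp add: D_def[abs_def])
qed

lemma Lp_norm_Q_form_Suc_le:
  fixes K q :: real and k n :: nat and b :: "nat list \<Rightarrow> real"
  defines "Y j \<equiv> Q_form k (j - 1) (\<lambda>I. b (I @ [j])) \<xi>"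
  assumes k: "Suc k \<le> d" and q: "q \<ge> 2" and K: "K \<ge> 0"
    and Y_integrable: "\<And>j. j \<in> {1..n} \<Longrightarrow> integrable M (\<lambda>x. \<bar>Y j x * \<xi> j (Suc k) x\<bar> powr q)"
    and Y_bound: "\<And>j. j \<in> {1..n} \<Longrightarrow>
      Lp_norm M q (\<lambda>x. Y j x * \<xi> j (Suc k) x) \<le> K * sqrt (\<Sum>I\<in>index_set k (j - 1). (b (I @ [j]))\<^sup>2)"
  shows "integrable M (\<lambda>x. \<bar>Q_form (Suc k) n b \<xi> x\<bar> powr q)"
    and "Lp_norm M q (Q_form (Suc k) n b \<xi>) \<le> sqrt 2 * q * K * sqrt (\<Sum>J\<in>index_set (Suc k) n. (b J)\<^sup>2)"
proof -
  define c where "c j = sqrt (\<Sum>I\<in>index_set k (j - 1). (b (I @ [j]))\<^sup>2)" for j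
  have Q_eq: "Q_form (Suc k) n b \<xi> = (\<lambda>x. \<Sum>j\<in>{1..n}. Y j x * \<xi> j (Suc k) x)"
    by (simp add: fun_eq_iff Q_form_Suc Y_def)
  have m: "Suc k \<in> {1..d}"
    using k by simp
  have Y_measurable: "Y j \<in> borel_measurable (F (j - 1))" for j
    unfolding Y_def using k by (intro Q_form_measurable) simp
  note transform = Lp_norm_martingale_transform_sq_le[OF m q Y_measurable Y_integrable]
  show "integrable M (\<lambda>x. \<bar>Q_form (Suc k) n b \<xi> x\<bar> powr q)"
    unfolding Q_eq by (rule transform(1))
  have sum_c: "(\<Sum>j\<in>{1..n}. (c j)\<^sup>2) = (\<Sum>J\<in>index_set (Suc k) n. (b J)\<^sup>2)"
    by (simp add: c_def sum_index_set_Suc[of "\<lambda>J. (b J)\<^sup>2"] sum_nonneg)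
  have "(Lp_norm M q (Q_form (Suc k) n b \<xi>))\<^sup>2
      \<le> q * (q - 1) * (\<Sum>j\<in>{1..n}. (Lp_norm M q (\<lambda>x. Y j x * \<xi> j (Suc k) x))\<^sup>2)"
    unfolding Q_eq by (rule transform(2))
  also have "\<dots> \<le> q * (q - 1) * (\<Sum>j\<in>{1..n}. (K * c j)\<^sup>2)"
    using q Y_bound by (intro mult_left_mono sum_mono power_mono) (auto simp: c_def Lp_norm_nonneg)
  also have "\<dots> = q * (q - 1) * K\<^sup>2 * (\<Sum>J\<in>index_set (Suc k) n. (b J)\<^sup>2)"
    unfolding sum_c[symmetric] by (simp add: power_mult_distrib sum_distrib_left mult_ac)
  finally have "Lp_norm M q (Q_form (Suc k) n b \<xi>)
      \<le> sqrt (q * (q - 1)) * K * sqrt (\<Sum>J\<in>index_set (Suc k) n. (b J)\<^sup>2)"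
    using K by (auto dest!: real_le_rsqrt simp: real_sqrt_mult)
  also have "\<dots> \<le> sqrt 2 * q * K * sqrt (\<Sum>J\<in>index_set (Suc k) n. (b J)\<^sup>2)"
    \<comment> \<open>Wasteful (\<open>q\<close> would do), but it is the constant entering \<open>gamma_const\<close>.\<close>
  proof -
    have "sqrt (q * (q - 1)) \<le> sqrt (q\<^sup>2)"
      using q by (intro real_sqrt_le_mono) (simp add: power2_eq_square)
    also have "\<dots> \<le> sqrt 2 * q"
      using q by simp
    finally show ?thesis
      using K by (intro mult_right_mono) (auto intro: sum_nonneg)
  qed
  finally show "Lp_norm M q (Q_form (Suc k) n b \<xi>) \<le> sqrt 2 * q * K * sqrt (\<Sum>J\<in>index_set (Suc k) n. (b J)\<^sup>2)" .
qed

lemma Lp_norm_mult_xi_le: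
  assumes m: "m \<in> {1..d}" and i: "1 \<le> i"
    and q: "q > 0" "q' > q" "r > q" "1 / q' + 1 / r = 1 / q"
    and [measurable]: "Y \<in> borel_measurable M" and Y_integrable: "integrable M (\<lambda>x. \<bar>Y x\<bar> powr q')"
  shows "integrable M (\<lambda>x. \<bar>Y x * \<xi> i m x\<bar> powr q)"
    and "Lp_norm M q (\<lambda>x. Y x * \<xi> i m x) \<le> Lp_norm M q' Y * mu M \<xi> m r"
proof -
  note Holder = Holder_inequality_Lp_norm[OF q _ borel_measurable_xi[OF i m] Y_integrable
      integrable_moment[OF i m]]
  show "integrable M (\<lambda>x. \<bar>Y x * \<xi> i m x\<bar> powr q)"
    using Holder(1) by simp
  have "Lp_norm M q (\<lambda>x. Y x * \<xi> i m x) \<le> Lp_norm M q' Y * Lp_norm M r (\<xi> i m)"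
    using Holder(2) by simp
  also have "\<dots> \<le> Lp_norm M q' Y * mu M \<xi> m r"
    using Lp_norm_le_mu[OF i m] by (intro mult_left_mono Lp_norm_nonneg)
  finally show "Lp_norm M q (\<lambda>x. Y x * \<xi> i m x) \<le> Lp_norm M q' Y * mu M \<xi> m r" .
qed

lemma Lp_norm_Q_form_1_le:
  assumes "1 \<le> d" "r \<ge> 2"
  shows "integrable M (\<lambda>x. \<bar>Q_form 1 n b \<xi> x\<bar> powr r)"
    and "Lp_norm M r (Q_form 1 n b \<xi>) \<le> sqrt 2 * r * mu M \<xi> 1 r * sqrt (\<Sum>I\<in>index_set 1 n. (b I)\<^sup>2)"
proof -
  have "mu M \<xi> 1 r \<ge> 0"
    using assms by (intro mu_nonneg) auto
  moreover have "integrable M (\<lambda>x. \<bar>Q_form 0 (j - 1) (\<lambda>I. b (I @ [j])) \<xi> x * \<xi> j (Suc 0) x\<bar> powr r)"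
    if "j \<in> {1..n}" for j
    using integrable_moment[of j 1] that assms by (simp add: Q_form_0 abs_mult powr_mult)
  moreover have "Lp_norm M r (\<lambda>x. Q_form 0 (j - 1) (\<lambda>I. b (I @ [j])) \<xi> x * \<xi> j (Suc 0) x)
      \<le> mu M \<xi> 1 r * sqrt (\<Sum>I\<in>index_set 0 (j - 1). (b (I @ [j]))\<^sup>2)" if "j \<in> {1..n}" for j
    using Lp_norm_le_mu[of j 1] that assms
    by (simp add: Q_form_0 index_set_0 Lp_norm_cmult mult.commute mult_left_mono)
  ultimately show "integrable M (\<lambda>x. \<bar>Q_form 1 n b \<xi> x\<bar> powr r)"
    and "Lp_norm M r (Q_form 1 n b \<xi>) \<le> sqrt 2 * r * mu M \<xi> 1 r * sqrt (\<Sum>I\<in>index_set 1 n. (b I)\<^sup>2)"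
    using Lp_norm_Q_form_Suc_le[of 0 r "mu M \<xi> 1 r" n b] assms by simp_all
qed

lemma Lp_norm_Q_form_Suc_step:
  fixes k :: nat and q :: real
  defines "q' \<equiv> r / k"
  assumes k: "1 \<le> k" "Suc k \<le> d" and q: "q \<ge> 2" and r: "real (Suc k) * q = r"
    and IH: "\<And>n b. integrable M (\<lambda>x. \<bar>Q_form k n b \<xi> x\<bar> powr q') \<and> Lp_norm M q' (Q_form k n b \<xi>)
      \<le> gamma_const k * q' ^ k * sqrt (\<Sum>I\<in>index_set k n. (b I)\<^sup>2) * (\<Prod>m=1..k. mu M \<xi> m r)"
  shows "integrable M (\<lambda>x. \<bar>Q_form (Suc k) n b \<xi> x\<bar> powr q) \<and> Lp_norm M q (Q_form (Suc k) n b \<xi>)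
      \<le> gamma_const (Suc k) * q ^ Suc k * sqrt (\<Sum>I\<in>index_set (Suc k) n. (b I)\<^sup>2) * (\<Prod>m=1..Suc k. mu M \<xi> m r)"
proof -
  define Y where "Y j = Q_form k (j - 1) (\<lambda>I. b (I @ [j])) \<xi>" for j
  define c where "c j = sqrt (\<Sum>I\<in>index_set k (j - 1). (b (I @ [j]))\<^sup>2)" for j
  define P where "P = (\<Prod>m=1..k. mu M \<xi> m r)"
  define K where "K = gamma_const k * q' ^ k * P * mu M \<xi> (Suc k) r"
  \<comment> \<open>Holder splits \<open>L^q\<close> into \<open>L^q'\<close> for \<open>Y j\<close> and \<open>L^r\<close> for \<open>\<xi>\<close>; \<open>k * q' = r\<close> keeps the induction going.\<close>
  have "real k \<ge> 1" "(real k + 1) * q > 0"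
    using k q by auto
  then have q': "q' = q * (1 + 1 / real k)"
    and exponents: "q > 0" "q' > q" "r > q" "1 / q' + 1 / r = 1 / q"
    using q by (auto simp: q'_def r[symmetric] field_simps)
  have "P \<ge> 0"
    unfolding P_def using k by (intro prod_nonneg mu_nonneg) auto
  then have K: "K \<ge> 0"
    unfolding K_def using k exponents q
    by (intro mult_nonneg_nonneg gamma_const_nonneg mu_nonneg) auto
  have Y_measurable: "Y j \<in> borel_measurable M" for j
    unfolding Y_def using k by (intro borel_measurable_F_imp_M[OF Q_form_measurable]) simp
  note Holder = Lp_norm_mult_xi_le[OF _ _ exponents Y_measurable]
  have IH_Y: "integrable M (\<lambda>x. \<bar>Y j x\<bar> powr q')" "Lp_norm M q' (Y j) \<le> gamma_const k * q' ^ k * c j * P" for j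
    using IH unfolding Y_def c_def P_def by auto
  have "integrable M (\<lambda>x. \<bar>Y j x * \<xi> j (Suc k) x\<bar> powr q)" if "j \<in> {1..n}" for j
    using Holder(1) IH_Y that k by auto
  moreover have "Lp_norm M q (\<lambda>x. Y j x * \<xi> j (Suc k) x) \<le> K * c j" if "j \<in> {1..n}" for j
  proof -
    have "Lp_norm M q (\<lambda>x. Y j x * \<xi> j (Suc k) x) \<le> Lp_norm M q' (Y j) * mu M \<xi> (Suc k) r"
      using Holder(2) IH_Y that k by auto
    also have "\<dots> \<le> gamma_const k * q' ^ k * c j * P * mu M \<xi> (Suc k) r"
      using IH_Y k by (intro mult_right_mono mu_nonneg) auto
    finally show ?thesis
      by (simp add: K_def mult_ac)
  qed
  ultimately have "integrable M (\<lambda>x. \<bar>Q_form (Suc k) n b \<xi> x\<bar> powr q) \<and>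
      Lp_norm M q (Q_form (Suc k) n b \<xi>) \<le> sqrt 2 * q * K * sqrt (\<Sum>J\<in>index_set (Suc k) n. (b J)\<^sup>2)"
    using Lp_norm_Q_form_Suc_le[of k q K n b] k q K by (simp add: Y_def c_def)
  moreover have "sqrt 2 * q * K = gamma_const (Suc k) * q ^ Suc k * (\<Prod>m=1..Suc k. mu M \<xi> m r)"
    using k by (simp add: K_def P_def q' gamma_const_Suc power_mult_distrib prod.cl_ivl_Suc mult_ac)
  ultimately show ?thesis
    by (metis mult.assoc mult.commute)
qed

lemma Lp_norm_Q_form_le:
  assumes "1 \<le> k" "k \<le> d" "q \<ge> 2" "real k * q = r"
  shows "integrable M (\<lambda>x. \<bar>Q_form k n b \<xi> x\<bar> powr q) \<and>
    Lp_norm M q (Q_form k n b \<xi>)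
      \<le> gamma_const k * q ^ k * sqrt (\<Sum>I\<in>index_set k n. (b I)\<^sup>2) * (\<Prod>m=1..k. mu M \<xi> m r)"
  using assms
proof (induction k arbitrary: q n b rule: nat_induct_at_least)
  case base
  then show ?case
    using Lp_norm_Q_form_1_le[of n b] by (simp add: mult_ac)
next
  case (Suc k)
  have "real k \<ge> 1"
    using Suc.hyps by simp
  then have "r / k \<ge> q" "real k * (r / k) = r"
    using Suc.prems by (auto simp: field_simps)
  then show ?case
    using Suc by (intro Lp_norm_Q_form_Suc_step) auto
qed

end

theorem theorem6:
  fixes M :: "'a measure" and F :: "nat \<Rightarrow> 'a measure"
    and \<xi> :: "nat \<Rightarrow> nat \<Rightarrow> 'a \<Rightarrow> real"
    and d n :: nat and p :: real
  assumes "prob_space M"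
    and "\<And>i. subalgebra M (F i)"
    and "\<And>i j. i \<le> j \<Longrightarrow> sets (F i) \<subseteq> sets (F j)"
    and "sets (F 0) = {{}, space M}"
    and "d \<ge> 1" and "p \<ge> 2"
    and "\<And>i m. i \<ge> 1 \<Longrightarrow> m \<in> {1..d} \<Longrightarrow> \<xi> i m \<in> borel_measurable (F i)"
    and "\<And>i m. i \<ge> 1 \<Longrightarrow> m \<in> {1..d} \<Longrightarrow> integrable M (\<xi> i m)"
    and "\<And>i m. i \<ge> 1 \<Longrightarrow> m \<in> {1..d} \<Longrightarrow>
           AE x in M. real_cond_exp M (F (i - 1)) (\<xi> i m) x = 0"
    and "\<And>i m. i \<ge> 1 \<Longrightarrow> m \<in> {1..d} \<Longrightarrow>
           integrable M (\<lambda>x. \<bar>\<xi> i m x\<bar> powr (real d * p))"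
    and "\<And>m. m \<in> {1..d} \<Longrightarrow>
           bdd_above ((\<lambda>i. (\<integral> x. \<bar>\<xi> i m x\<bar> powr (real d * p) \<partial>M)
                          powr (1 / (real d * p))) ` {1..})"
  shows "\<forall>b. (\<Sum>I\<in>index_set d n. (b I)\<^sup>2) = 1 \<longrightarrow>
           moment M p (Q_form d n b \<xi>) \<le>
           ennreal ((gamma_const d * p ^ d * (\<Prod>m=1..d. mu M \<xi> m (real d * p))) powr p)"
proof (intro allI impI)
  fix b :: "nat list \<Rightarrow> real"
  assume b: "(\<Sum>I\<in>index_set d n. (b I)\<^sup>2) = 1"
  have "\<And>m. m \<in> {1..d} \<Longrightarrow> bdd_above ((\<lambda>i. Lp_norm M (real d * p) (\<xi> i m)) ` {1..})"
    unfolding Lp_norm_def by (rule assms(11))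
  then interpret martingale_difference_array M F \<xi> d "real d * p"
    using assms(1-3,7,9,10)
    by (intro martingale_difference_array.intro martingale_difference_array_axioms.intro)
  define C where "C = gamma_const d * p ^ d * (\<Prod>m=1..d. mu M \<xi> m (real d * p))"
  have "integrable M (\<lambda>x. \<bar>Q_form d n b \<xi> x\<bar> powr p) \<and> Lp_norm M p (Q_form d n b \<xi>) \<le> C"
    using Lp_norm_Q_form_le[of d p n b] assms(5,6) b by (simp add: C_def)
  then have "moment M p (Q_form d n b \<xi>) = ennreal (Lp_norm M p (Q_form d n b \<xi>) powr p)"
    and "Lp_norm M p (Q_form d n b \<xi>) powr p \<le> C powr p"
    using assms(6) by (auto simp: moment_eq_Lp_norm_powr Lp_norm_nonneg intro: powr_mono2)
  then show "moment M p (Q_form d n b \<xi>) \<le> ennreal (C powr p)"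
    by (simp add: ennreal_leI)
qed

end
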